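(* Let $\mathcal{S}$ and $\mathcal{S}'$ be square-free stratified staged trees, each of whose stages consist of situations at a single level, which are statistically equivalent via a bijection $\varphi:\Lambda(\mathcal{S})\to\Lambda(\mathcal{S}')$. Let $\alpha>0$, let $\mathcal{D}=(N_\lambda)_{\lambda\in\Lambda(\mathcal{S})}$ be a complete data sample on $\mathcal{S}$ and $\mathcal{D}'$ the sample on $\mathcal{S}'$ with $N'_{\varphi(\lambda)}=N_\lambda$. Then $\mathrm{CS\text{-}BDeu}(\mathcal{S},\mathcal{D};\alpha)=\mathrm{CS\text{-}BDeu}(\mathcal{S}',\mathcal{D}';\alpha)$.
   Context: An event tree is a finite directed rooted tree with edges directed away from the root; leaves have no outgoing edges, other nodes are situations; the level of a node is its distance from the root. A staged tree is an event tree with a partition of its situations into stages, situations in a common stage having the same number of outgoing edges, labelled consistently, with the $k$-th edges sharing a transition probability; its model is the set of distributions on the set $\Lambda(\mathcal{S})$ of root-to-leaf paths obtained by choosing a positive probability vector for each stage and multiplying edge probabilities along paths. Square-free: no two situations on one root-to-leaf path lie in the same stage. $\mathcal{S},\mathcal{S}'$ are statistically equivalent via a bijection $\varphi$ if the model of $\mathcal{S}$ equals $\{p\circ\varphi: p$ in the model of $\mathcal{S}'\}$. For variables $X_1,\dots,X_n$ with finite state spaces $\mathbb{X}_i$, an event tree is $\mathcal{X}$-compatible if its nodes are the root together with one node $v(x_1,\dots,x_k)$ for each $(x_1,\dots,x_k)\in\mathbb{X}_1\times\dots\times\mathbb{X}_k$, $1\le k\le n$, with edges from $v(x_1,\dots,x_{k-1})$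 to $v(x_1,\dots,x_k)$; a staged tree is stratified if its event tree is $\mathcal{X}$-compatible for some $\mathcal{X}$. Data: a complete sample assigns counts $N_\lambda$ to paths; $n_{jk}$ is the number of units passing through the $k$-th edge of some situation in stage $u_j$, $\overline n_j=\sum_k n_{jk}$. The BD-metric with hyperparameters $\alpha_{jk}$, $\overline\alpha_j=\sum_k\alpha_{jk}$, is $\prod_j\big[\Gamma(\overline\alpha_j)/\Gamma(\overline\alpha_j+\overline n_j)\prod_k\Gamma(\alpha_{jk}+n_{jk})/\Gamma(\alpha_{jk})\big]$. CS-BDeu: hyperparameters are propagated forward from the root. The root stage has $\dot\alpha=\alpha$. For a stage $u_{ij}$ at level $i-1$ with $h_{ij}$ situations and $r_{ij}$ outgoing edges per situation, $\dot\alpha_{ij}$ is the sum of the (individual) hyperparameters of the edges entering its situations, the stage edge hyperparameters are $\alpha_{ijk}=\dot\alpha_{ij}/r_{ij}$, and each individual edge emanating from a situation of $u_{ij}$ along label $k$ receives hyperparameter $\alpha_{ijk}/h_{ij}$. The CS-BDeu score is the BD-metric with stage hyperparameters $\alpha_{ijk}$. *)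

theory Defs
  imports "HOL-Analysis.Analysis"
begin

text \<open>Variables X_0,...,X_{n-1} with state spaces
  {0..<sizes!i}.  Nodes of the (X-compatible) event tree are the lists
  [x_0,...,x_{k-1}] with x_i < sizes!i and k \<le> n; the root is [], the edge
  from v(x_0..x_{k-1}) goes to v(x_0..x_k).  Situations are the nodes of length
  < n, root-to-leaf paths are identified with the leaves (length n).
  The staging is given by a function assigning a stage name to each
  situation (stages = its fibres on the situations); the consistent edge
  labelling assigns to the edge of situation s towards child value x the label
  index lab s x in {0..<number of outgoing edges}.\<close>

record stree =
  sizes :: "nat list"
  stage :: "nat list \<Rightarrow> nat"
  lab   :: "nat list \<Rightarrow> nat \<Rightarrow> nat"

definition nodes_at :: "stree \<Rightarrow> nat \<Rightarrow> nat list set" where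
  "nodes_at T k = {s. length s = k \<and> (\<forall>i<k. s ! i < sizes T ! i)}"

definition situations :: "stree \<Rightarrow> nat list set" where
  "situations T = {s. length s < length (sizes T) \<and> (\<forall>i<length s. s ! i < sizes T ! i)}"

definition paths :: "stree \<Rightarrow> nat list set" where
  "paths T = nodes_at T (length (sizes T))"

definition nout :: "stree \<Rightarrow> nat list \<Rightarrow> nat" where
  "nout T s = sizes T ! length s"

definition staged_tree :: "stree \<Rightarrow> bool" where
  "staged_tree T \<longleftrightarrow>
     (\<forall>i<length (sizes T). sizes T ! i > 0) \<and>
     (\<forall>s\<in>situations T. \<forall>t\<in>situations T. stage T s = stage T t \<longrightarrow> nout T s = nout T t) \<and>
     (\<forall>s\<in>situations T. bij_betw (lab T s) {0..<nout T s} {0..<nout T s})"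

definition square_free :: "stree \<Rightarrow> bool" where
  "square_free T \<longleftrightarrow>
     (\<forall>l\<in>paths T. \<forall>i j. i < j \<and> j < length (sizes T) \<longrightarrow> stage T (take i l) \<noteq> stage T (take j l))"

definition single_level_stages :: "stree \<Rightarrow> bool" where
  "single_level_stages T \<longleftrightarrow>
     (\<forall>s\<in>situations T. \<forall>t\<in>situations T. stage T s = stage T t \<longrightarrow> length s = length t)"

definition model :: "stree \<Rightarrow> (nat list \<Rightarrow> real) set" where
  "model T = {p. \<exists>\<theta> :: nat \<Rightarrow> nat \<Rightarrow> real.
      (\<forall>s\<in>situations T. (\<forall>k<nout T s. \<theta> (stage T s) k > 0) \<and>
                          (\<Sum>k<nout T s. \<theta> (stage T s) k) = 1) \<and>
      p = (\<lambda>l. if l \<in> paths T then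
                 (\<Prod>i<length (sizes T). \<theta> (stage T (take i l)) (lab T (take i l) (l ! i)))
               else undefined)}"

definition stat_equiv :: "stree \<Rightarrow> stree \<Rightarrow> (nat list \<Rightarrow> nat list) \<Rightarrow> bool" where
  "stat_equiv T T' \<phi> \<longleftrightarrow> bij_betw \<phi> (paths T) (paths T') \<and>
     model T = (\<lambda>p. restrict (p \<circ> \<phi>) (paths T)) ` model T'"

text \<open>CS-BDeu.  Stages are indexed by (level, stage name).\<close>

definition stage_sits :: "stree \<Rightarrow> nat \<Rightarrow> nat \<Rightarrow> nat list set" where
  "stage_sits T L u = {s\<in>situations T. length s = L \<and> stage T s = u}"

text \<open>dot_alpha T a L u: the hyperparameter of stage u at level L, i.e. the
  sum of the individual hyperparameters of the edges entering its situations
  (alpha for the root stage).  An individual edge leaving a situation of a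
  stage v at level L carries (dot_alpha v / r_v) / h_v.\<close>
primrec dot_alpha :: "stree \<Rightarrow> real \<Rightarrow> nat \<Rightarrow> nat \<Rightarrow> real" where
  "dot_alpha T a 0 = (\<lambda>u. a)"
| "dot_alpha T a (Suc L) = (\<lambda>u. \<Sum>s\<in>stage_sits T (Suc L) u.
      (dot_alpha T a L (stage T (butlast s)) / real (sizes T ! L))
        / real (card (stage_sits T L (stage T (butlast s)))))"

definition cnt :: "stree \<Rightarrow> (nat list \<Rightarrow> nat) \<Rightarrow> nat \<Rightarrow> nat \<Rightarrow> nat \<Rightarrow> nat" where
  "cnt T N L u k = (\<Sum>l\<in>{l\<in>paths T. stage T (take L l) = u \<and> lab T (take L l) (l ! L) = k}. N l)"

definition stages :: "stree \<Rightarrow> (nat \<times> nat) set" where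
  "stages T = {(length s, stage T s) | s. s \<in> situations T}"

definition cs_bdeu :: "stree \<Rightarrow> (nat list \<Rightarrow> nat) \<Rightarrow> real \<Rightarrow> real" where
  "cs_bdeu T N a = (\<Prod>(L, u)\<in>stages T.
     (let ad = dot_alpha T a L u; r = sizes T ! L;
          nbar = (\<Sum>k<r. cnt T N L u k)
      in Gamma ad / Gamma (ad + real nbar) *
         (\<Prod>k<r. Gamma (ad / real r + real (cnt T N L u k)) / Gamma (ad / real r))))"

end

theory Submission
  imports Defs "HOL-Library.Multiset" "HOL-Real_Asymp.Real_Asymp"
begin

(* Attach to every edge and every stage the set A of root-to-leaf paths through it. The CS-BDeu
   propagation spreads alpha uniformly over each level, so the hyperparameter of an edge or a
   stage is alpha |A| / |Lambda| and the score is the product of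
   Gamma(alpha |A| / |Lambda| + N(A)) / Gamma(alpha |A| / |Lambda|) over the edge path sets divided
   by the same product over the stage path sets.

   For positive path weights w, the maximised log-likelihood of a tree with single-level stages
   is the sum of w(A) ln w(A) over the edge path sets minus the same sum over the stage path sets.
   It depends on the model only, so statistically equivalent trees share it for every w. Such
   functions of w determine the multiset of sets they are built from: as the weight of a minimal
   set tends to 0, only its own term fails to be differentiable. Hence, after transport along phi,
   edge sets of S plus stage sets of S' equal stage sets of S plus edge sets of S', and the two
   scores coincide. *)

section \<open>Sums of x ln x determine a multiset of sets\<close>

definition xlnx :: "real \<Rightarrow> real" where
  "xlnx x = x * ln x"

lemma has_real_derivative_sum_mset_xlnx_affine:
  fixes M :: "'b multiset" and a b :: "'b \<Rightarrow> real"
  assumes "\<forall>B\<in>#M. b B > 0"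
  shows "\<exists>D. ((\<lambda>t. \<Sum>B\<in>#M. xlnx (a B * t + b B)) has_real_derivative D) (at 0)"
  using assms
proof (induction M)
  case empty
  show ?case by (auto intro: DERIV_const)
next
  case (add B M)
  then obtain D where D: "((\<lambda>t. \<Sum>B\<in>#M. xlnx (a B * t + b B)) has_real_derivative D) (at 0)"
    by auto
  have "b B > 0" using add.prems by simp
  then have "((\<lambda>t. xlnx (a B * t + b B)) has_real_derivative (ln (b B) + 1) * a B) (at 0)"
    unfolding xlnx_def by (auto intro!: derivative_eq_intros simp: algebra_simps)
  from DERIV_add[OF this D] show ?case by auto
qed

lemma not_has_real_derivative_scaled_xlnx:
  assumes F: "(F has_real_derivative D) (at 0)" and "c > 0" "k > 0"
    and F_eq: "\<And>t. t > 0 \<Longrightarrow> F t = c * xlnx (k * t)"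
  shows False
proof -
  have ev_pos: "eventually (\<lambda>t. t > 0) (at_right (0::real))"
    by (simp add: eventually_at_right_less)
  have F_cont: "(F \<longlongrightarrow> F 0) (at_right 0)"
    using DERIV_isCont[OF F] by (simp add: isCont_def filterlim_at_split)
  have "((\<lambda>t. c * xlnx (k * t)) \<longlongrightarrow> 0) (at_right 0)"
    unfolding xlnx_def using \<open>k > 0\<close> by real_asymp
  then have "(F \<longlongrightarrow> 0) (at_right 0)"
    by (rule Lim_transform_eventually) (use ev_pos F_eq in \<open>auto elim: eventually_mono\<close>)
  then have "F 0 = 0"
    using tendsto_unique[OF _ F_cont] by simp
  then have "((\<lambda>t. F t / t) \<longlongrightarrow> D) (at_right 0)"
    using F by (simp add: DERIV_def filterlim_at_split)
  moreover have "filterlim (\<lambda>t. c * k * ln (k * t)) at_bot (at_right 0)"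
    using \<open>c > 0\<close> \<open>k > 0\<close> by real_asymp
  then have "filterlim (\<lambda>t. F t / t) at_bot (at_right 0)"
    by (rule filterlim_cong[THEN iffD1, rotated 3])
       (use ev_pos in \<open>auto elim!: eventually_mono simp: F_eq xlnx_def\<close>)
  ultimately show False
    using not_tendsto_and_filterlim_at_infinity[of "at_right (0::real)"] filterlim_at_bot_imp_at_infinity
    by fastforce
qed

lemma sum_xlnx_separates_minimal_set:
  fixes P Q :: "'a set multiset" and A :: "'a set"
  assumes fin: "\<forall>B\<in>#P + Q. finite B" and A: "A \<in># P" "A \<notin># Q" "A \<noteq> {}"
    and minimal: "\<forall>B\<in>#P + Q. B \<subseteq> A \<longrightarrow> B = A"
  shows "\<exists>w. (\<forall>x. w x > 0) \<and> (\<Sum>B\<in>#P. xlnx (sum w B)) \<noteq> (\<Sum>B\<in>#Q. xlnx (sum w B))"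
proof (rule ccontr)
  assume "\<not> ?thesis"
  then have eq: "(\<Sum>B\<in>#P. xlnx (sum w B)) = (\<Sum>B\<in>#Q. xlnx (sum w B))" if "\<forall>x. w x > 0" for w
    using that by blast
  define R where "R = filter_mset (\<lambda>B. B \<noteq> A) P"
  have P_eq: "P = replicate_mset (count P A) A + R"
    by (auto simp: multiset_eq_iff R_def)
  define a where "a B = real (card (B \<inter> A))" for B
  define b where "b B = real (card (B - A))" for B
  \<comment> \<open>Weight \<open>t\<close> on \<open>A\<close> and \<open>1\<close> elsewhere: every other set keeps a point outside \<open>A\<close>,
    so only the term of \<open>A\<close> sees the singularity of \<open>x ln x\<close> at \<open>0\<close>.\<close>
  have sum_weight: "(\<Sum>x\<in>B. if x \<in> A then t else 1) = a B * t + b B" if "finite B" for B and t :: real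
    using that by (simp add: sum.If_cases Int_def Diff_eq a_def b_def)
  have b_pos: "b B > 0" if "B \<in># P + Q" "B \<noteq> A" for B
    using fin minimal that by (auto simp: b_def card_gt_0_iff)
  define F where "F t = (\<Sum>B\<in>#Q. xlnx (a B * t + b B)) - (\<Sum>B\<in>#R. xlnx (a B * t + b B))" for t
  have "\<forall>B\<in>#Q. b B > 0" "\<forall>B\<in>#R. b B > 0"
    using b_pos A(2) by (auto simp: R_def)
  then obtain D1 D2 where
    "((\<lambda>t. \<Sum>B\<in>#Q. xlnx (a B * t + b B)) has_real_derivative D1) (at 0)"
    "((\<lambda>t. \<Sum>B\<in>#R. xlnx (a B * t + b B)) has_real_derivative D2) (at 0)"
    using has_real_derivative_sum_mset_xlnx_affine[where a=a] by meson
  then have F_deriv: "(F has_real_derivative D1 - D2) (at 0)"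
    unfolding F_def by (rule DERIV_diff)
  have "F t = real (count P A) * xlnx (real (card A) * t)" if "t > 0" for t
  proof -
    have "(\<Sum>B\<in>#M. xlnx (\<Sum>x\<in>B. if x \<in> A then t else 1)) = (\<Sum>B\<in>#M. xlnx (a B * t + b B))"
      if "M \<subseteq># P + Q" for M
      using that fin sum_weight by (intro arg_cong[where f=sum_mset] image_mset_cong) (auto dest: mset_subset_eqD)
    then have "(\<Sum>B\<in>#P. xlnx (a B * t + b B)) = (\<Sum>B\<in>#Q. xlnx (a B * t + b B))"
      using eq[of "\<lambda>x. if x \<in> A then t else 1"] \<open>t > 0\<close> by simp
    moreover have "a A * t + b A = real (card A) * t"
      by (simp add: a_def b_def)
    ultimately show ?thesis
      by (subst (asm) P_eq) (simp add: F_def)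
  qed
  moreover have "real (count P A) > 0" "real (card A) > 0"
    using A fin by (auto simp: card_gt_0_iff)
  ultimately show False
    using not_has_real_derivative_scaled_xlnx[OF F_deriv] by blast
qed

lemma multiset_eq_if_sum_xlnx_eq:
  fixes P Q :: "'a set multiset"
  assumes sets: "\<forall>B\<in>#P + Q. finite B \<and> B \<noteq> {}"
    and eq: "\<And>w. \<forall>x. w x > 0 \<Longrightarrow> (\<Sum>B\<in>#P. xlnx (sum w B)) = (\<Sum>B\<in>#Q. xlnx (sum w B))"
  shows "P = Q"
proof (rule ccontr)
  assume "P \<noteq> Q"
  define P' Q' where "P' = P - Q" and "Q' = Q - P"
  have P_eq: "P = P' + (P \<inter># Q)" and Q_eq: "Q = Q' + (P \<inter># Q)"
    by (auto simp: multiset_eq_iff P'_def Q'_def)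
  have eq': "(\<Sum>B\<in>#P'. xlnx (sum w B)) = (\<Sum>B\<in>#Q'. xlnx (sum w B))" if "\<forall>x. w x > 0" for w
    using eq[OF that] by (subst (asm) P_eq, subst (asm) Q_eq) simp
  have "P' + Q' \<subseteq># P + Q"
    unfolding P'_def Q'_def by (simp add: subset_mset.add_mono)
  then have sets': "\<forall>B\<in>#P' + Q'. finite B \<and> B \<noteq> {}"
    using sets by (meson mset_subset_eqD)
  have "P' + Q' \<noteq> {#}"
    using \<open>P \<noteq> Q\<close> P_eq Q_eq by auto
  then obtain B0 where "B0 \<in># P' + Q'"
    by (rule multiset_nonemptyE)
  then obtain A where A: "A \<in># P' + Q'" and least: "\<forall>B\<in>#P' + Q'. card A \<le> card B"
    using ex_has_least_nat[of "\<lambda>B. B \<in># P' + Q'" B0 card] by blast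
  have minimal: "\<forall>B\<in>#P' + Q'. B \<subseteq> A \<longrightarrow> B = A"
  proof (intro ballI impI)
    fix B assume "B \<in># P' + Q'" "B \<subseteq> A"
    then show "B = A"
      using least sets' A by (meson card_seteq)
  qed
  have finite': "\<forall>B\<in>#P' + Q'. finite B" and "A \<noteq> {}"
    using sets' A by auto
  have "count P' A = 0 \<or> count Q' A = 0"
    by (auto simp: P'_def Q'_def)
  then consider "A \<in># P'" "A \<notin># Q'" | "A \<in># Q'" "A \<notin># P'"
    using A by (metis count_eq_zero_iff union_iff)
  then show False
  proof cases
    case 1
    then show False
      using sum_xlnx_separates_minimal_set[OF finite' 1 \<open>A \<noteq> {}\<close> minimal] eq' by metis
  next
    case 2
    then show False
      using sum_xlnx_separates_minimal_set[of Q' P', OF _ 2 \<open>A \<noteq> {}\<close>] finite' minimal eq'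
      by (metis add.commute)
  qed
qed

section \<open>Counting root-to-leaf paths\<close>

definition bounded_lists :: "nat list \<Rightarrow> nat list set" where
  "bounded_lists bs = {xs. list_all2 (<) xs bs}"

lemma bounded_lists_Cons:
  "bounded_lists (b # bs) = (\<lambda>(x, xs). x # xs) ` ({..<b} \<times> bounded_lists bs)"
  by (auto simp: bounded_lists_def list_all2_Cons2 image_iff)

lemma finite_card_bounded_lists: "finite (bounded_lists bs) \<and> card (bounded_lists bs) = prod_list bs"
proof (induction bs)
  case Nil
  have "bounded_lists [] = {[]}" by (simp add: bounded_lists_def)
  then show ?case by simp
next
  case (Cons b bs)
  have "inj_on (\<lambda>(x, xs). x # xs) ({..<b} \<times> bounded_lists bs)"
    by (auto simp: inj_on_def)
  then show ?case
    using Cons.IH by (simp add: bounded_lists_Cons card_image card_cartesian_product)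
qed

lemma append_in_bounded_lists_iff:
  assumes "length xs = L" "L \<le> length bs"
  shows "xs @ ys \<in> bounded_lists bs \<longleftrightarrow> xs \<in> bounded_lists (take L bs) \<and> ys \<in> bounded_lists (drop L bs)"
proof -
  have "list_all2 (<) (xs @ ys) (take L bs @ drop L bs) \<longleftrightarrow>
      list_all2 (<) xs (take L bs) \<and> list_all2 (<) ys (drop L bs)"
    using assms by (intro list_all2_append) simp
  then show ?thesis
    by (simp add: bounded_lists_def)
qed

lemma bij_betw_take_drop_bounded_lists:
  assumes "X \<subseteq> bounded_lists (take L bs)" "L \<le> length bs"
  shows "bij_betw (\<lambda>xs. (take L xs, drop L xs)) {xs \<in> bounded_lists bs. take L xs \<in> X}
           (X \<times> bounded_lists (drop L bs))"
proof -
  have length_X: "length xs = L" if "xs \<in> X" for xs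
  proof -
    have "length xs = length (take L bs)"
      using that assms(1) list_all2_lengthD unfolding bounded_lists_def by blast
    then show ?thesis
      using assms(2) by simp
  qed
  have drop_mem: "drop L xs \<in> bounded_lists (drop L bs)" if "xs \<in> bounded_lists bs" "take L xs \<in> X" for xs
    using append_in_bounded_lists_iff[OF length_X[OF that(2)] assms(2), of "drop L xs"] that by simp
  show ?thesis
    by (rule bij_betw_byWitness[where f' = "\<lambda>(xs, ys). xs @ ys"])
      (use length_X drop_mem append_in_bounded_lists_iff[OF length_X assms(2)] assms(1) in auto)
qed

lemma nodes_at_eq_bounded_lists:
  "L \<le> length (sizes T) \<Longrightarrow> nodes_at T L = bounded_lists (take L (sizes T))"
  by (auto simp: nodes_at_def bounded_lists_def list_all2_conv_all_nth)

lemma paths_eq_bounded_lists: "paths T = bounded_lists (sizes T)"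
  by (simp add: paths_def nodes_at_eq_bounded_lists)

lemma finite_paths [simp]: "finite (paths T)"
  and card_paths: "card (paths T) = prod_list (sizes T)"
  using finite_card_bounded_lists by (auto simp: paths_eq_bounded_lists)

lemma finite_nodes_at [simp]: "L \<le> length (sizes T) \<Longrightarrow> finite (nodes_at T L)"
  using finite_card_bounded_lists by (simp add: nodes_at_eq_bounded_lists)

lemma situations_eq_UN_nodes_at: "situations T = (\<Union>L<length (sizes T). nodes_at T L)"
  by (auto simp: situations_def nodes_at_def)

lemma finite_situations [simp]: "finite (situations T)"
  by (simp add: situations_eq_UN_nodes_at)

lemma card_paths_with_prefix:
  assumes "X \<subseteq> nodes_at T L" "L \<le> length (sizes T)"
  shows "card {l \<in> paths T. take L l \<in> X} = card X * prod_list (drop L (sizes T))"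
proof -
  have "X \<subseteq> bounded_lists (take L (sizes T))"
    using assms by (simp add: nodes_at_eq_bounded_lists)
  then have "bij_betw (\<lambda>l. (take L l, drop L l)) {l \<in> paths T. take L l \<in> X}
      (X \<times> bounded_lists (drop L (sizes T)))"
    unfolding paths_eq_bounded_lists using assms(2) by (rule bij_betw_take_drop_bounded_lists)
  then have "card {l \<in> paths T. take L l \<in> X} = card X * card (bounded_lists (drop L (sizes T)))"
    by (simp add: bij_betw_same_card card_cartesian_product)
  then show ?thesis
    by (simp add: finite_card_bounded_lists)
qed

lemma prod_list_take_drop_sizes_pos:
  assumes "staged_tree T"
  shows "prod_list (take L (sizes T)) > 0" "prod_list (drop L (sizes T)) > 0"
proof -
  have "0 \<notin> set (sizes T)"
    using assms by (auto simp: staged_tree_def in_set_conv_nth)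
  then have "0 \<notin> set (take L (sizes T))" "0 \<notin> set (drop L (sizes T))"
    by (auto dest: in_set_takeD in_set_dropD)
  then show "prod_list (take L (sizes T)) > 0" "prod_list (drop L (sizes T)) > 0"
    by (metis gr0I prod_list_zero_iff)+
qed

lemma path_prefix:
  assumes "l \<in> paths T" "L < length (sizes T)"
  shows "take L l \<in> situations T" "length (take L l) = L" "l ! L < nout T (take L l)"
    and "take (Suc L) l = take L l @ [l ! L]"
proof -
  have l: "length l = length (sizes T)" "\<forall>i<length (sizes T). l ! i < sizes T ! i"
    using assms(1) by (simp_all add: paths_def nodes_at_def)
  then show "take L l \<in> situations T"
    using assms(2) by (simp add: situations_def)
  show "length (take L l) = L" "l ! L < nout T (take L l)"
    using l assms(2) by (simp_all add: nout_def)
  show "take (Suc L) l = take L l @ [l ! L]"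
    using l(1) assms(2) by (simp add: take_Suc_conv_app_nth)
qed

lemma bij_betw_lab:
  "staged_tree T \<Longrightarrow> s \<in> situations T \<Longrightarrow> bij_betw (lab T s) {0..<nout T s} {0..<nout T s}"
  unfolding staged_tree_def by blast

lemma lab_less_nout:
  assumes "staged_tree T" "s \<in> situations T" "x < nout T s"
  shows "lab T s x < nout T s"
  using bij_betw_apply[OF bij_betw_lab[OF assms(1,2)], of x] assms(3) by simp

definition stage_paths :: "stree \<Rightarrow> nat \<Rightarrow> nat \<Rightarrow> nat list set" where
  "stage_paths T L u = {l \<in> paths T. stage T (take L l) = u}"

definition edge_paths :: "stree \<Rightarrow> nat \<Rightarrow> nat \<Rightarrow> nat \<Rightarrow> nat list set" where
  "edge_paths T L u k = {l \<in> paths T. stage T (take L l) = u \<and> lab T (take L l) (l ! L) = k}"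

lemma stages_iff: "(L, u) \<in> stages T \<longleftrightarrow> L < length (sizes T) \<and> stage_sits T L u \<noteq> {}"
  by (auto simp: stages_def stage_sits_def situations_def)

lemma finite_stages [simp]: "finite (stages T)"
proof -
  have "stages T = (\<lambda>s. (length s, stage T s)) ` situations T"
    by (auto simp: stages_def)
  then show ?thesis
    by simp
qed

lemma stage_sits_subset_nodes_at: "stage_sits T L u \<subseteq> nodes_at T L"
  by (auto simp: stage_sits_def situations_def nodes_at_def)

lemma finite_stage_sits [simp]: "finite (stage_sits T L u)"
  using finite_situations by (rule rev_finite_subset) (auto simp: stage_sits_def)

lemma card_stage_paths:
  assumes "L < length (sizes T)"
  shows "card (stage_paths T L u) = card (stage_sits T L u) * prod_list (drop L (sizes T))"
proof -
  have "stage_paths T L u = {l \<in> paths T. take L l \<in> stage_sits T L u}"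
    using path_prefix[OF _ assms] by (auto simp: stage_paths_def stage_sits_def)
  then show ?thesis
    using card_paths_with_prefix[OF stage_sits_subset_nodes_at] assms by simp
qed

definition edge_targets :: "stree \<Rightarrow> nat \<Rightarrow> nat \<Rightarrow> nat \<Rightarrow> nat list set" where
  "edge_targets T L u k = {s @ [x] | s x. s \<in> stage_sits T L u \<and> x < sizes T ! L \<and> lab T s x = k}"

lemma card_edge_targets:
  assumes "staged_tree T" "k < sizes T ! L"
  shows "card (edge_targets T L u k) = card (stage_sits T L u)"
proof -
  have nout: "nout T s = sizes T ! L" if "s \<in> stage_sits T L u" for s
    using that by (simp add: stage_sits_def nout_def)
  have bij: "bij_betw (lab T s) {0..<sizes T ! L} {0..<sizes T ! L}" if "s \<in> stage_sits T L u" for s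
    using bij_betw_lab[OF assms(1)] that nout[OF that] by (fastforce simp: stage_sits_def)
  have "inj_on butlast (edge_targets T L u k)"
  proof (rule inj_onI)
    fix v w assume "v \<in> edge_targets T L u k" "w \<in> edge_targets T L u k" "butlast v = butlast w"
    then obtain s x y where vw: "v = s @ [x]" "w = s @ [y]" and s: "s \<in> stage_sits T L u"
      and xy: "x < sizes T ! L" "y < sizes T ! L" "lab T s x = lab T s y"
      by (auto simp: edge_targets_def)
    have "x = y"
      using inj_onD[OF bij_betw_imp_inj_on[OF bij[OF s]] xy(3)] xy(1,2) by simp
    then show "v = w"
      using vw by simp
  qed
  moreover have "butlast ` edge_targets T L u k = stage_sits T L u"
  proof (intro equalityI subsetI)
    fix s assume s: "s \<in> stage_sits T L u"
    then obtain x where "x < sizes T ! L" "lab T s x = k"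
      using bij[OF s] assms(2) by (metis atLeastLessThan_iff bij_betw_iff_bijections zero_le)
    then have "s @ [x] \<in> edge_targets T L u k"
      using s by (auto simp: edge_targets_def)
    then show "s \<in> butlast ` edge_targets T L u k"
      by force
  qed (auto simp: edge_targets_def)
  ultimately show ?thesis
    by (metis bij_betw_same_card inj_on_imp_bij_betw)
qed

lemma card_edge_paths:
  assumes "staged_tree T" "L < length (sizes T)" "k < sizes T ! L"
  shows "card (edge_paths T L u k) = card (stage_sits T L u) * prod_list (drop (Suc L) (sizes T))"
proof -
  have "edge_paths T L u k = {l \<in> paths T. take (Suc L) l \<in> edge_targets T L u k}"
    using path_prefix[OF _ assms(2)]
    by (auto simp: edge_paths_def edge_targets_def stage_sits_def nout_def)
  moreover have "edge_targets T L u k \<subseteq> nodes_at T (Suc L)"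
    by (auto simp: edge_targets_def stage_sits_def situations_def nodes_at_def nth_append less_Suc_eq)
  ultimately show ?thesis
    using card_paths_with_prefix[of "edge_targets T L u k"] card_edge_targets[OF assms(1,3)] assms(2)
    by simp
qed

section \<open>CS-BDeu as a ratio over path sets\<close>

text \<open>\<open>prod_list (take L (sizes T))\<close> is the number of nodes at level \<open>L\<close>: every situation of a
  level receives the same share of \<open>a\<close>.\<close>

lemma dot_alpha_eq_card_stage_sits:
  assumes "staged_tree T" "stage_sits T L u \<noteq> {}"
  shows "dot_alpha T a L u = real (card (stage_sits T L u)) * a / real (prod_list (take L (sizes T)))"
  using assms(2)
proof (induction L arbitrary: u)
  case 0
  have "stage_sits T 0 u \<subseteq> {[]}"
    by (auto simp: stage_sits_def)
  with "0.prems" have "stage_sits T 0 u = {[]}"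
    by blast
  then show ?case
    by simp
next
  case (Suc L)
  have Suc_L: "Suc L < length (sizes T)"
    using Suc.prems by (auto simp: stage_sits_def situations_def)
  have P_Suc: "prod_list (take (Suc L) (sizes T)) = prod_list (take L (sizes T)) * sizes T ! L"
    using Suc_L by (simp add: take_Suc_conv_app_nth)
  have summand: "dot_alpha T a L (stage T (butlast s)) / real (sizes T ! L)
        / real (card (stage_sits T L (stage T (butlast s)))) = a / real (prod_list (take (Suc L) (sizes T)))"
    if s: "s \<in> stage_sits T (Suc L) u" for s
  proof -
    have "butlast s \<in> stage_sits T L (stage T (butlast s))"
      using s by (auto simp: stage_sits_def situations_def nth_butlast)
    then have "stage_sits T L (stage T (butlast s)) \<noteq> {}"
      by blast
    moreover from this have "real (card (stage_sits T L (stage T (butlast s)))) > 0"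
      by (simp add: card_gt_0_iff)
    moreover have "real (prod_list (take (Suc L) (sizes T))) > 0"
      using prod_list_take_drop_sizes_pos[OF assms(1)] by simp
    ultimately show ?thesis
      using Suc.IH P_Suc by (simp add: field_simps)
  qed
  have "dot_alpha T a (Suc L) u = (\<Sum>s\<in>stage_sits T (Suc L) u. a / real (prod_list (take (Suc L) (sizes T))))"
    using summand by simp
  then show ?case
    by simp
qed

definition path_hyper :: "stree \<Rightarrow> real \<Rightarrow> nat list set \<Rightarrow> real" where
  "path_hyper T a A = a * real (card A) / real (card (paths T))"

lemma dot_alpha_eq_path_hyper:
  assumes "staged_tree T" "(L, u) \<in> stages T"
  shows "dot_alpha T a L u = path_hyper T a (stage_paths T L u)"
proof -
  have L: "L < length (sizes T)" and "stage_sits T L u \<noteq> {}"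
    using assms(2) by (auto simp: stages_iff)
  moreover have "card (paths T) = prod_list (take L (sizes T)) * prod_list (drop L (sizes T))"
    by (metis card_paths append_take_drop_id prod_list.append)
  moreover note prod_list_take_drop_sizes_pos[OF assms(1), of L]
  ultimately show ?thesis
    using dot_alpha_eq_card_stage_sits[OF assms(1)] by (simp add: path_hyper_def card_stage_paths[OF L])
qed

lemma dot_alpha_div_eq_path_hyper:
  assumes "staged_tree T" "(L, u) \<in> stages T" "k < sizes T ! L"
  shows "dot_alpha T a L u / real (sizes T ! L) = path_hyper T a (edge_paths T L u k)"
proof -
  have L: "L < length (sizes T)" and "stage_sits T L u \<noteq> {}"
    using assms(2) by (auto simp: stages_iff)
  moreover have "card (paths T) = prod_list (take L (sizes T)) * (sizes T ! L * prod_list (drop (Suc L) (sizes T)))"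
    by (metis card_paths append_take_drop_id prod_list.append Cons_nth_drop_Suc[OF L] prod_list.Cons)
  moreover note prod_list_take_drop_sizes_pos[OF assms(1), of L]
    prod_list_take_drop_sizes_pos[OF assms(1), of "Suc L"]
  ultimately show ?thesis
    using dot_alpha_eq_card_stage_sits[OF assms(1)] assms(3)
    by (simp add: path_hyper_def card_edge_paths[OF assms(1) L assms(3)])
qed

lemma sum_stage_paths_by_edge:
  assumes "staged_tree T" "L < length (sizes T)"
  shows "sum f (stage_paths T L u) = (\<Sum>k<sizes T ! L. sum f (edge_paths T L u k))"
proof -
  have "(\<lambda>l. lab T (take L l) (l ! L)) ` stage_paths T L u \<subseteq> {..<sizes T ! L}"
    using path_prefix[OF _ assms(2)] lab_less_nout[OF assms(1)]
    by (fastforce simp: stage_paths_def nout_def)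
  then have "sum f (stage_paths T L u)
      = (\<Sum>k<sizes T ! L. sum f {l \<in> stage_paths T L u. lab T (take L l) (l ! L) = k})"
    by (intro sum.group[symmetric]) (simp_all add: stage_paths_def)
  then show ?thesis
    by (simp add: stage_paths_def edge_paths_def conj_assoc)
qed

definition bdeu_factor :: "stree \<Rightarrow> (nat list \<Rightarrow> nat) \<Rightarrow> real \<Rightarrow> nat list set \<Rightarrow> real" where
  "bdeu_factor T N a A = Gamma (path_hyper T a A + real (sum N A)) / Gamma (path_hyper T a A)"

lemma cs_bdeu_stage_term:
  assumes "staged_tree T" "(L, u) \<in> stages T"
  shows "(let ad = dot_alpha T a L u; r = sizes T ! L; nbar = (\<Sum>k<r. cnt T N L u k)
          in Gamma ad / Gamma (ad + real nbar) *
             (\<Prod>k<r. Gamma (ad / real r + real (cnt T N L u k)) / Gamma (ad / real r)))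
       = (\<Prod>k<sizes T ! L. bdeu_factor T N a (edge_paths T L u k)) / bdeu_factor T N a (stage_paths T L u)"
proof -
  have L: "L < length (sizes T)"
    using assms(2) by (simp add: stages_iff)
  have cnt: "cnt T N L u k = sum N (edge_paths T L u k)" for k
    by (simp add: cnt_def edge_paths_def)
  have "real (\<Sum>k<sizes T ! L. cnt T N L u k) = real (sum N (stage_paths T L u))"
    by (simp only: cnt sum_stage_paths_by_edge[OF assms(1) L])
  moreover have "(\<Prod>k<sizes T ! L. Gamma (dot_alpha T a L u / real (sizes T ! L) + real (cnt T N L u k))
        / Gamma (dot_alpha T a L u / real (sizes T ! L)))
      = (\<Prod>k<sizes T ! L. bdeu_factor T N a (edge_paths T L u k))"
    by (intro prod.cong refl) (simp add: bdeu_factor_def cnt dot_alpha_div_eq_path_hyper[OF assms])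
  ultimately show ?thesis
    by (simp add: Let_def bdeu_factor_def dot_alpha_eq_path_hyper[OF assms])
qed

text \<open>Multisets, since distinct edges or stages may be passed by the same set of paths.\<close>

definition edge_path_sets :: "stree \<Rightarrow> nat list set multiset" where
  "edge_path_sets T = image_mset (\<lambda>((L, u), k). edge_paths T L u k)
     (mset_set (SIGMA s:stages T. {..<sizes T ! fst s}))"

definition stage_path_sets :: "stree \<Rightarrow> nat list set multiset" where
  "stage_path_sets T = image_mset (\<lambda>(L, u). stage_paths T L u) (mset_set (stages T))"

lemma sum_mset_edge_path_sets:
  "(\<Sum>A\<in>#edge_path_sets T. h A) = (\<Sum>(L, u)\<in>stages T. \<Sum>k<sizes T ! L. h (edge_paths T L u k))"
  by (simp add: edge_path_sets_def sum_unfold_sum_mset[symmetric] image_mset.compositionality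
      comp_def split_beta sum.Sigma)

lemma prod_mset_edge_path_sets:
  "(\<Prod>A\<in>#edge_path_sets T. h A) = (\<Prod>(L, u)\<in>stages T. \<Prod>k<sizes T ! L. h (edge_paths T L u k))"
  by (simp add: edge_path_sets_def prod_unfold_prod_mset[symmetric] image_mset.compositionality
      comp_def split_beta prod.Sigma)

lemma sum_mset_stage_path_sets:
  "(\<Sum>A\<in>#stage_path_sets T. h A) = (\<Sum>(L, u)\<in>stages T. h (stage_paths T L u))"
  by (simp add: stage_path_sets_def sum_unfold_sum_mset[symmetric] image_mset.compositionality
      comp_def split_beta)

lemma prod_mset_stage_path_sets:
  "(\<Prod>A\<in>#stage_path_sets T. h A) = (\<Prod>(L, u)\<in>stages T. h (stage_paths T L u))"
  by (simp add: stage_path_sets_def prod_unfold_prod_mset[symmetric] image_mset.compositionality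
      comp_def split_beta)

lemma cs_bdeu_eq_path_sets_ratio:
  assumes "staged_tree T"
  shows "cs_bdeu T N a = (\<Prod>A\<in>#edge_path_sets T. bdeu_factor T N a A)
                       / (\<Prod>A\<in>#stage_path_sets T. bdeu_factor T N a A)"
  using cs_bdeu_stage_term[OF assms]
  by (simp add: cs_bdeu_def prod_mset_edge_path_sets prod_mset_stage_path_sets prod_dividef split_beta)

lemma
  assumes "staged_tree T" "(L, u) \<in> stages T"
  shows stage_paths_nonempty: "stage_paths T L u \<noteq> {}"
    and edge_paths_nonempty: "k < sizes T ! L \<Longrightarrow> edge_paths T L u k \<noteq> {}"
proof -
  have L: "L < length (sizes T)" and "card (stage_sits T L u) > 0"
    using assms(2) by (auto simp: stages_iff card_gt_0_iff)
  then show "stage_paths T L u \<noteq> {}" "k < sizes T ! L \<Longrightarrow> edge_paths T L u k \<noteq> {}"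
    using card_stage_paths[OF L] card_edge_paths[OF assms(1) L] prod_list_take_drop_sizes_pos[OF assms(1)]
    by (metis card.empty mult_is_0 neq0_conv)+
qed

lemma path_sets_nonempty_subsets:
  assumes "staged_tree T" "A \<in># edge_path_sets T + stage_path_sets T"
  shows "A \<noteq> {} \<and> A \<subseteq> paths T"
proof -
  consider L u k where "(L, u) \<in> stages T" "k < sizes T ! L" "A = edge_paths T L u k"
    | L u where "(L, u) \<in> stages T" "A = stage_paths T L u"
    using assms(2) by (auto simp: edge_path_sets_def stage_path_sets_def)
  then show ?thesis
    using stage_paths_nonempty[OF assms(1)] edge_paths_nonempty[OF assms(1)]
    by cases (auto simp: stage_paths_def edge_paths_def)
qed

section \<open>The maximum log-likelihood\<close>

definition stage_params :: "stree \<Rightarrow> (nat \<Rightarrow> nat \<Rightarrow> real) \<Rightarrow> bool" where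
  "stage_params T \<theta> \<longleftrightarrow> (\<forall>s\<in>situations T.
     (\<forall>k<nout T s. \<theta> (stage T s) k > 0) \<and> (\<Sum>k<nout T s. \<theta> (stage T s) k) = 1)"

definition path_prob :: "stree \<Rightarrow> (nat \<Rightarrow> nat \<Rightarrow> real) \<Rightarrow> nat list \<Rightarrow> real" where
  "path_prob T \<theta> = (\<lambda>l. if l \<in> paths T then
     (\<Prod>i<length (sizes T). \<theta> (stage T (take i l)) (lab T (take i l) (l ! i))) else undefined)"

lemma in_model_iff: "p \<in> model T \<longleftrightarrow> (\<exists>\<theta>. stage_params T \<theta> \<and> p = path_prob T \<theta>)"
  by (simp add: model_def stage_params_def path_prob_def)

definition loglik :: "stree \<Rightarrow> (nat list \<Rightarrow> real) \<Rightarrow> (nat list \<Rightarrow> real) \<Rightarrow> real" where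
  "loglik T w p = (\<Sum>l\<in>paths T. w l * ln (p l))"

definition max_loglik :: "stree \<Rightarrow> (nat list \<Rightarrow> real) \<Rightarrow> real" where
  "max_loglik T w = (\<Sum>(L, u)\<in>stages T.
     (\<Sum>k<sizes T ! L. xlnx (sum w (edge_paths T L u k))) - xlnx (sum w (stage_paths T L u)))"

lemma max_loglik_eq_path_sets:
  "max_loglik T w = (\<Sum>A\<in>#edge_path_sets T. xlnx (sum w A)) - (\<Sum>A\<in>#stage_path_sets T. xlnx (sum w A))"
  by (simp add: max_loglik_def sum_mset_edge_path_sets sum_mset_stage_path_sets sum_subtractf split_beta)

lemma finite_level_stages [simp]: "finite {u. (L, u) \<in> stages T}"
  using finite_vimageI[OF finite_stages, of "Pair L"] by (simp add: vimage_def inj_on_def)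

lemma sum_paths_by_stage:
  assumes "L < length (sizes T)"
  shows "sum f (paths T) = (\<Sum>u\<in>{u. (L, u) \<in> stages T}. sum f (stage_paths T L u))"
proof -
  have "(\<lambda>l. stage T (take L l)) ` paths T \<subseteq> {u. (L, u) \<in> stages T}"
    using path_prefix[OF _ assms] by (force simp: stages_def)
  then show ?thesis
    unfolding stage_paths_def by (intro sum.group[symmetric]) auto
qed

lemma sum_paths_by_edge:
  fixes w :: "nat list \<Rightarrow> 'a::semiring_0"
  assumes "staged_tree T" "L < length (sizes T)"
  shows "(\<Sum>l\<in>paths T. w l * g (stage T (take L l)) (lab T (take L l) (l ! L)))
       = (\<Sum>u\<in>{u. (L, u) \<in> stages T}. \<Sum>k<sizes T ! L. sum w (edge_paths T L u k) * g u k)"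
proof -
  have "(\<Sum>l\<in>paths T. w l * g (stage T (take L l)) (lab T (take L l) (l ! L)))
      = (\<Sum>u\<in>{u. (L, u) \<in> stages T}. \<Sum>k<sizes T ! L. \<Sum>l\<in>edge_paths T L u k.
          w l * g (stage T (take L l)) (lab T (take L l) (l ! L)))"
    by (simp add: sum_paths_by_stage[OF assms(2)] sum_stage_paths_by_edge[OF assms])
  also have "\<dots> = (\<Sum>u\<in>{u. (L, u) \<in> stages T}. \<Sum>k<sizes T ! L. sum w (edge_paths T L u k) * g u k)"
    by (intro sum.cong refl) (simp add: sum_distrib_right edge_paths_def)
  finally show ?thesis .
qed

lemma stages_eq_Sigma_levels: "stages T = (SIGMA L:{..<length (sizes T)}. {u. (L, u) \<in> stages T})"
  by (auto simp: stages_iff)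

lemma loglik_path_prob:
  assumes "staged_tree T" and pos: "\<forall>s\<in>situations T. \<forall>k<nout T s. \<theta> (stage T s) k > 0"
  shows "loglik T w (path_prob T \<theta>) =
    (\<Sum>(L, u)\<in>stages T. \<Sum>k<sizes T ! L. sum w (edge_paths T L u k) * ln (\<theta> u k))"
proof -
  let ?n = "length (sizes T)"
  let ?\<theta> = "\<lambda>i l. \<theta> (stage T (take i l)) (lab T (take i l) (l ! i))"
  have \<theta>_pos: "?\<theta> i l > 0" if "l \<in> paths T" "i < ?n" for i l
    using pos path_prefix[OF that] lab_less_nout[OF assms(1)] by simp
  have "ln (\<Prod>i<?n. ?\<theta> i l) = (\<Sum>i<?n. ln (?\<theta> i l))" if "l \<in> paths T" for l
    using \<theta>_pos[OF that] by (intro ln_prod) force+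
  then have "loglik T w (path_prob T \<theta>) = (\<Sum>l\<in>paths T. \<Sum>i<?n. w l * ln (?\<theta> i l))"
    unfolding loglik_def path_prob_def by (intro sum.cong refl) (simp add: sum_distrib_left)
  also have "\<dots> = (\<Sum>i<?n. \<Sum>l\<in>paths T. w l * ln (?\<theta> i l))"
    by (rule sum.swap)
  also have "\<dots> = (\<Sum>i<?n. \<Sum>u\<in>{u. (i, u) \<in> stages T}. \<Sum>k<sizes T ! i.
      sum w (edge_paths T i u k) * ln (\<theta> u k))"
    using sum_paths_by_edge[OF assms(1), where g = "\<lambda>u k. ln (\<theta> u k)"] by simp
  also have "\<dots> = (\<Sum>(L, u)\<in>(SIGMA L:{..<?n}. {u. (L, u) \<in> stages T}).
      \<Sum>k<sizes T ! L. sum w (edge_paths T L u k) * ln (\<theta> u k))"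
    by (rule sum.Sigma) auto
  also have "\<dots> = (\<Sum>(L, u)\<in>stages T. \<Sum>k<sizes T ! L. sum w (edge_paths T L u k) * ln (\<theta> u k))"
    by (simp only: stages_eq_Sigma_levels[symmetric])
  finally show ?thesis .
qed

lemma gibbs_inequality:
  fixes n \<theta> :: "'a \<Rightarrow> real"
  assumes "finite K" "\<forall>k\<in>K. n k > 0" "\<forall>k\<in>K. \<theta> k > 0" "(\<Sum>k\<in>K. \<theta> k) = 1"
  shows "(\<Sum>k\<in>K. n k * ln (\<theta> k)) \<le> (\<Sum>k\<in>K. n k * ln (n k / sum n K))"
proof -
  let ?N = "sum n K"
  have "K \<noteq> {}"
    using assms(4) by auto
  then have N_pos: "?N > 0"
    using assms(1,2) by (intro sum_pos) auto
  have "n k * ln (\<theta> k) - n k * ln (n k / ?N) = n k * ln (\<theta> k * ?N / n k)" if "k \<in> K" for k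
  proof -
    have "n k > 0" "\<theta> k > 0"
      using assms(2,3) that by auto
    then show ?thesis
      using N_pos by (simp add: ln_div ln_mult algebra_simps)
  qed
  then have "(\<Sum>k\<in>K. n k * ln (\<theta> k)) - (\<Sum>k\<in>K. n k * ln (n k / ?N)) = (\<Sum>k\<in>K. n k * ln (\<theta> k * ?N / n k))"
    by (simp add: sum_subtractf[symmetric])
  also have "\<dots> \<le> (\<Sum>k\<in>K. n k * (\<theta> k * ?N / n k - 1))"
    using assms(2,3) N_pos by (intro sum_mono mult_left_mono ln_le_minus_one) auto
  also have "\<dots> = (\<Sum>k\<in>K. \<theta> k * ?N - n k)"
    using assms(2) by (intro sum.cong refl) (simp add: field_simps less_imp_neq[symmetric])
  also have "\<dots> = (\<Sum>k\<in>K. \<theta> k) * ?N - ?N"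
    by (simp add: sum_subtractf sum_distrib_right)
  finally show ?thesis
    using assms(4) by simp
qed

lemma sum_mult_ln_ratio:
  fixes n :: "'a \<Rightarrow> real"
  assumes "\<forall>k\<in>K. n k > 0"
  shows "(\<Sum>k\<in>K. n k * ln (n k / sum n K)) = (\<Sum>k\<in>K. xlnx (n k)) - xlnx (sum n K)"
proof (cases "finite K \<and> K \<noteq> {}")
  case True
  then have "sum n K > 0"
    using assms by (intro sum_pos) auto
  then have "n k * ln (n k / sum n K) = xlnx (n k) - n k * ln (sum n K)" if "k \<in> K" for k
    using assms that by (simp add: xlnx_def ln_div algebra_simps)
  then show ?thesis
    by (simp add: xlnx_def sum_subtractf sum_distrib_right)
qed (auto simp: xlnx_def)

lemma
  fixes w :: "nat list \<Rightarrow> real"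
  assumes "staged_tree T" "(L, u) \<in> stages T" "\<forall>l. w l > 0"
  shows sum_stage_paths_pos: "sum w (stage_paths T L u) > 0"
    and sum_edge_paths_pos: "k < sizes T ! L \<Longrightarrow> sum w (edge_paths T L u k) > 0"
proof -
  show "sum w (stage_paths T L u) > 0"
    using assms(3) stage_paths_nonempty[OF assms(1,2)] by (intro sum_pos) (auto simp: stage_paths_def)
  show "sum w (edge_paths T L u k) > 0" if "k < sizes T ! L"
    using assms(3) edge_paths_nonempty[OF assms(1,2) that] by (intro sum_pos) (auto simp: edge_paths_def)
qed

lemma stage_loglik_ratio:
  assumes "staged_tree T" "(L, u) \<in> stages T" "\<forall>l. w l > 0"
  shows "(\<Sum>k<sizes T ! L. sum w (edge_paths T L u k) * ln (sum w (edge_paths T L u k) / sum w (stage_paths T L u)))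
       = (\<Sum>k<sizes T ! L. xlnx (sum w (edge_paths T L u k))) - xlnx (sum w (stage_paths T L u))"
proof -
  have L: "L < length (sizes T)"
    using assms(2) by (simp add: stages_iff)
  show ?thesis
    unfolding sum_stage_paths_by_edge[OF assms(1) L]
    using sum_edge_paths_pos[OF assms] by (intro sum_mult_ln_ratio) simp
qed

lemma stage_loglik_le:
  assumes "staged_tree T" "(L, u) \<in> stages T" "\<forall>l. w l > 0"
    and "\<forall>k<sizes T ! L. \<theta> k > 0" "(\<Sum>k<sizes T ! L. \<theta> k) = 1"
  shows "(\<Sum>k<sizes T ! L. sum w (edge_paths T L u k) * ln (\<theta> k))
       \<le> (\<Sum>k<sizes T ! L. xlnx (sum w (edge_paths T L u k))) - xlnx (sum w (stage_paths T L u))"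
proof -
  have L: "L < length (sizes T)"
    using assms(2) by (simp add: stages_iff)
  have "(\<Sum>k<sizes T ! L. sum w (edge_paths T L u k) * ln (\<theta> k))
      \<le> (\<Sum>k<sizes T ! L. sum w (edge_paths T L u k) * ln (sum w (edge_paths T L u k) / sum w (stage_paths T L u)))"
    unfolding sum_stage_paths_by_edge[OF assms(1) L]
    using sum_edge_paths_pos[OF assms(1-3)] assms(4,5) by (intro gibbs_inequality) simp_all
  then show ?thesis
    by (simp only: stage_loglik_ratio[OF assms(1-3)])
qed

lemma stage_params_at_stage:
  assumes "stage_params T \<theta>" "(L, u) \<in> stages T"
  shows "\<forall>k<sizes T ! L. \<theta> u k > 0" "(\<Sum>k<sizes T ! L. \<theta> u k) = 1"
proof -
  obtain s where "s \<in> situations T" "length s = L" "stage T s = u"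
    using assms(2) by (auto simp: stages_def)
  then show "\<forall>k<sizes T ! L. \<theta> u k > 0" "(\<Sum>k<sizes T ! L. \<theta> u k) = 1"
    using assms(1) by (auto simp: stage_params_def nout_def)
qed

lemma loglik_le_max_loglik:
  assumes "staged_tree T" "p \<in> model T" "\<forall>l. w l > 0"
  shows "loglik T w p \<le> max_loglik T w"
proof -
  obtain \<theta> where \<theta>: "stage_params T \<theta>" and p: "p = path_prob T \<theta>"
    using assms(2) in_model_iff by blast
  then have "loglik T w p =
      (\<Sum>(L, u)\<in>stages T. \<Sum>k<sizes T ! L. sum w (edge_paths T L u k) * ln (\<theta> u k))"
    using loglik_path_prob[OF assms(1)] by (simp add: stage_params_def)
  also have "\<dots> \<le> max_loglik T w"
    unfolding max_loglik_def
    using stage_loglik_le[OF assms(1) _ assms(3)] stage_params_at_stage[OF \<theta>]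
    by (intro sum_mono) auto
  finally show ?thesis .
qed

lemma the_stage_level:
  assumes "single_level_stages T" "(L, u) \<in> stages T"
  shows "(THE L. (L, u) \<in> stages T) = L"
proof (rule the_equality)
  fix L' assume "(L', u) \<in> stages T"
  then show "L' = L"
    using assms unfolding stages_def single_level_stages_def by blast
qed (fact assms(2))

lemma max_loglik_attained:
  fixes w :: "nat list \<Rightarrow> real"
  assumes "staged_tree T" "single_level_stages T" "\<forall>l. w l > 0"
  shows "\<exists>p\<in>model T. loglik T w p = max_loglik T w"
proof -
  define \<theta> where "\<theta> u k = (let L = THE L. (L, u) \<in> stages T in
    sum w (edge_paths T L u k) / sum w (stage_paths T L u))" for u k
  have \<theta>_stage: "\<theta> u k = sum w (edge_paths T L u k) / sum w (stage_paths T L u)"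
    if "(L, u) \<in> stages T" for L u k
    using the_stage_level[OF assms(2) that] by (simp add: \<theta>_def)
  have "stage_params T \<theta>"
    unfolding stage_params_def
  proof
    fix s assume "s \<in> situations T"
    then have S: "(length s, stage T s) \<in> stages T" and L: "length s < length (sizes T)"
      by (auto simp: stages_def situations_def)
    show "(\<forall>k<nout T s. \<theta> (stage T s) k > 0) \<and> (\<Sum>k<nout T s. \<theta> (stage T s) k) = 1"
      using \<theta>_stage[OF S] sum_edge_paths_pos[OF assms(1) S assms(3)] sum_stage_paths_pos[OF assms(1) S assms(3)]
      by (simp add: nout_def sum_divide_distrib[symmetric] sum_stage_paths_by_edge[OF assms(1) L, symmetric])
  qed
  moreover have "loglik T w (path_prob T \<theta>) = max_loglik T w"
  proof -
    have "loglik T w (path_prob T \<theta>) = (\<Sum>(L, u)\<in>stages T. \<Sum>k<sizes T ! L.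
        sum w (edge_paths T L u k) * ln (sum w (edge_paths T L u k) / sum w (stage_paths T L u)))"
      using loglik_path_prob[OF assms(1)] \<open>stage_params T \<theta>\<close> \<theta>_stage
      by (auto simp: stage_params_def intro!: sum.cong)
    then show ?thesis
      using stage_loglik_ratio[OF assms(1) _ assms(3)] by (auto simp: max_loglik_def intro!: sum.cong)
  qed
  ultimately show ?thesis
    using in_model_iff by blast
qed

lemma loglik_restrict_comp:
  assumes "bij_betw \<phi> (paths S) (paths S')"
  shows "loglik S (w \<circ> \<phi>) (restrict (q \<circ> \<phi>) (paths S)) = loglik S' w q"
  unfolding loglik_def using sum.reindex_bij_betw[OF assms, of "\<lambda>m. w m * ln (q m)"] by simp

lemma max_loglik_stat_equiv:
  fixes w :: "nat list \<Rightarrow> real"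
  assumes "staged_tree S" "staged_tree S'" "single_level_stages S" "single_level_stages S'"
    and "stat_equiv S S' \<phi>" "\<forall>m. w m > 0"
  shows "max_loglik S (w \<circ> \<phi>) = max_loglik S' w"
proof (rule antisym)
  have bij: "bij_betw \<phi> (paths S) (paths S')"
    and model: "model S = (\<lambda>q. restrict (q \<circ> \<phi>) (paths S)) ` model S'"
    using assms(5) by (simp_all add: stat_equiv_def)
  have pos: "\<forall>l. (w \<circ> \<phi>) l > 0"
    using assms(6) by simp
  obtain p where "p \<in> model S" "loglik S (w \<circ> \<phi>) p = max_loglik S (w \<circ> \<phi>)"
    using max_loglik_attained[OF assms(1,3) pos] by blast
  moreover from this obtain q where "q \<in> model S'" "p = restrict (q \<circ> \<phi>) (paths S)"
    using model by blast
  ultimately show "max_loglik S (w \<circ> \<phi>) \<le> max_loglik S' w"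
    using loglik_le_max_loglik[OF assms(2) _ assms(6)] loglik_restrict_comp[OF bij] by metis
  obtain q where "q \<in> model S'" "loglik S' w q = max_loglik S' w"
    using max_loglik_attained[OF assms(2,4,6)] by blast
  moreover have "restrict (q \<circ> \<phi>) (paths S) \<in> model S"
    using model calculation(1) by blast
  ultimately show "max_loglik S' w \<le> max_loglik S (w \<circ> \<phi>)"
    using loglik_le_max_loglik[OF assms(1) _ pos] loglik_restrict_comp[OF bij] by metis
qed

section \<open>Statistically equivalent trees\<close>

lemma bdeu_factor_pos:
  assumes "A \<subseteq> paths T" "A \<noteq> {}" "a > 0"
  shows "bdeu_factor T N a A > 0"
proof -
  have "card A > 0" "card (paths T) > 0"
    using assms(1,2) finite_paths[of T] by (auto simp: card_gt_0_iff finite_subset)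
  then have "path_hyper T a A > 0"
    using assms(3) by (simp add: path_hyper_def)
  then show ?thesis
    unfolding bdeu_factor_def by (intro divide_pos_pos Gamma_real_pos add_pos_nonneg) (simp_all add: sum_nonneg)
qed

lemma bdeu_factor_image:
  assumes "bij_betw \<phi> (paths S) (paths S')" "\<forall>l\<in>paths S. N' (\<phi> l) = N l" "A \<subseteq> paths S"
  shows "bdeu_factor S' N' a (\<phi> ` A) = bdeu_factor S N a A"
proof -
  have inj: "inj_on \<phi> A"
    using assms(1,3) bij_betw_imp_inj_on inj_on_subset by blast
  have "sum N' (\<phi> ` A) = sum (N' \<circ> \<phi>) A"
    by (rule sum.reindex[OF inj])
  also have "\<dots> = sum N A"
    using assms(2,3) by (intro sum.cong) auto
  finally show ?thesis
    using card_image[OF inj] bij_betw_same_card[OF assms(1)]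
    by (simp add: bdeu_factor_def path_hyper_def)
qed

lemma cs_bdeu_eq_image_path_sets_ratio:
  assumes "staged_tree S" "bij_betw \<phi> (paths S) (paths S')" "\<forall>l\<in>paths S. N' (\<phi> l) = N l"
  shows "cs_bdeu S N a = (\<Prod>B\<in>#image_mset ((`) \<phi>) (edge_path_sets S). bdeu_factor S' N' a B)
                       / (\<Prod>B\<in>#image_mset ((`) \<phi>) (stage_path_sets S). bdeu_factor S' N' a B)"
proof -
  have "(\<Prod>A\<in>#M. bdeu_factor S N a A) = (\<Prod>B\<in>#image_mset ((`) \<phi>) M. bdeu_factor S' N' a B)"
    if "\<forall>A\<in>#M. A \<subseteq> paths S" for M
    using that bdeu_factor_image[OF assms(2,3)] by (induction M) auto
  then show ?thesis
    using path_sets_nonempty_subsets[OF assms(1)] by (simp add: cs_bdeu_eq_path_sets_ratio[OF assms(1)])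
qed

lemma path_sets_image_nonempty_subsets:
  assumes "staged_tree S" "staged_tree S'" "bij_betw \<phi> (paths S) (paths S')"
    and "B \<in># image_mset ((`) \<phi>) (edge_path_sets S) \<or> B \<in># image_mset ((`) \<phi>) (stage_path_sets S)
      \<or> B \<in># edge_path_sets S' \<or> B \<in># stage_path_sets S'"
  shows "B \<noteq> {} \<and> B \<subseteq> paths S'"
proof (cases "B \<in># edge_path_sets S' \<or> B \<in># stage_path_sets S'")
  case True
  then show ?thesis
    using path_sets_nonempty_subsets[OF assms(2)] by (simp only: union_iff) blast
next
  case False
  then obtain A where "A \<in># edge_path_sets S + stage_path_sets S" "B = \<phi> ` A"
    using assms(4) by (metis imageE set_image_mset union_iff)
  then show ?thesis
    using path_sets_nonempty_subsets[OF assms(1)] bij_betw_imp_surj_on[OF assms(3)] by blast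
qed

lemma sum_mset_xlnx_image:
  assumes "inj_on \<phi> X" "\<forall>A\<in>#M. A \<subseteq> X"
  shows "(\<Sum>B\<in>#image_mset ((`) \<phi>) M. xlnx (sum w B)) = (\<Sum>A\<in>#M. xlnx (sum (w \<circ> \<phi>) A))"
  using assms(2) by (induction M) (auto simp: sum.reindex inj_on_subset[OF assms(1)])

lemma path_sets_stat_equiv:
  assumes "staged_tree S" "staged_tree S'" "single_level_stages S" "single_level_stages S'"
    and "stat_equiv S S' \<phi>"
  shows "image_mset ((`) \<phi>) (edge_path_sets S) + stage_path_sets S'
       = image_mset ((`) \<phi>) (stage_path_sets S) + edge_path_sets S'"
proof (rule multiset_eq_if_sum_xlnx_eq)
  have bij: "bij_betw \<phi> (paths S) (paths S')"
    using assms(5) by (simp add: stat_equiv_def)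
  have "B \<noteq> {} \<and> B \<subseteq> paths S'" if "B \<in># image_mset ((`) \<phi>) (edge_path_sets S) + stage_path_sets S' +
      (image_mset ((`) \<phi>) (stage_path_sets S) + edge_path_sets S')" for B
    using that path_sets_image_nonempty_subsets[OF assms(1,2) bij, of B]
    unfolding set_mset_union Un_iff by blast
  then show "\<forall>B\<in>#image_mset ((`) \<phi>) (edge_path_sets S) + stage_path_sets S' +
      (image_mset ((`) \<phi>) (stage_path_sets S) + edge_path_sets S'). finite B \<and> B \<noteq> {}"
    using finite_subset[OF _ finite_paths] by blast
  fix w :: "nat list \<Rightarrow> real"
  assume w: "\<forall>m. w m > 0"
  have inj: "inj_on \<phi> (paths S)"
    using bij by (rule bij_betw_imp_inj_on)
  have "\<forall>A\<in>#edge_path_sets S. A \<subseteq> paths S" "\<forall>A\<in>#stage_path_sets S. A \<subseteq> paths S"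
    using path_sets_nonempty_subsets[OF assms(1)] by auto
  moreover have "(\<Sum>A\<in>#edge_path_sets S. xlnx (sum (w \<circ> \<phi>) A)) - (\<Sum>A\<in>#stage_path_sets S. xlnx (sum (w \<circ> \<phi>) A))
      = (\<Sum>A\<in>#edge_path_sets S'. xlnx (sum w A)) - (\<Sum>A\<in>#stage_path_sets S'. xlnx (sum w A))"
    using max_loglik_stat_equiv[OF assms w] by (simp only: max_loglik_eq_path_sets)
  ultimately show "(\<Sum>B\<in>#image_mset ((`) \<phi>) (edge_path_sets S) + stage_path_sets S'. xlnx (sum w B))
      = (\<Sum>B\<in>#image_mset ((`) \<phi>) (stage_path_sets S) + edge_path_sets S'. xlnx (sum w B))"
    by (simp add: sum_mset_xlnx_image[OF inj])
qed

lemma prod_mset_ratio_eq: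
  fixes f :: "'a \<Rightarrow> 'b::field"
  assumes "E + T' = T + E'" "\<forall>A\<in>#T + T'. f A \<noteq> 0"
  shows "(\<Prod>A\<in>#E. f A) / (\<Prod>A\<in>#T. f A) = (\<Prod>A\<in>#E'. f A) / (\<Prod>A\<in>#T'. f A)"
proof -
  have "(\<Prod>A\<in>#E. f A) * (\<Prod>A\<in>#T'. f A) = (\<Prod>A\<in>#T. f A) * (\<Prod>A\<in>#E'. f A)"
    using arg_cong[OF assms(1), of "\<lambda>M. \<Prod>A\<in>#M. f A"] by simp
  moreover have "(\<Prod>A\<in>#T. f A) \<noteq> 0" "(\<Prod>A\<in>#T'. f A) \<noteq> 0"
    using assms(2) by auto
  ultimately show ?thesis
    by (simp add: frac_eq_eq mult.commute)
qed

theorem mainTheorem6: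
  fixes S S' :: stree and \<phi> :: "nat list \<Rightarrow> nat list" and \<alpha> :: real
    and N N' :: "nat list \<Rightarrow> nat"
  assumes "staged_tree S" and "staged_tree S'"
    and "square_free S" and "square_free S'"
    and "single_level_stages S" and "single_level_stages S'"
    and "stat_equiv S S' \<phi>"
    and "\<alpha> > 0"
    and "\<forall>l\<in>paths S. N' (\<phi> l) = N l"
  shows "cs_bdeu S N \<alpha> = cs_bdeu S' N' \<alpha>"
proof -
  have bij: "bij_betw \<phi> (paths S) (paths S')"
    using assms(7) by (simp add: stat_equiv_def)
  have "bdeu_factor S' N' \<alpha> B > 0" if "B \<in># image_mset ((`) \<phi>) (stage_path_sets S) + stage_path_sets S'" for B
    using that path_sets_image_nonempty_subsets[OF assms(1,2) bij, of B] bdeu_factor_pos[OF _ _ assms(8)]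
    unfolding set_mset_union Un_iff by blast
  then show ?thesis
    unfolding cs_bdeu_eq_image_path_sets_ratio[OF assms(1) bij assms(9)] cs_bdeu_eq_path_sets_ratio[OF assms(2)]
    by (intro prod_mset_ratio_eq[OF path_sets_stat_equiv[OF assms(1,2,5,6,7)]]) (simp add: order_less_imp_not_eq2)
qed

end
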